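(* Let $e\ge 3$, let $y\in[1,e-1]$ be rational with denominator $z>1$, and $i\in\mathbb Z/e\mathbb Z$. Suppose a partition $\lambda$ has a removable $i$-node $(r,c)$ and an addable $i$-node $(s,d)$ with $\mathrm{dep}(s,d)-e<\mathrm{dep}(r,c)<\mathrm{dep}(s,d)$. Then $\lambda$ has a $y$-bad hook.
   Context: Nodes are elements $(r,c)$ of $\mathbb N^2$ (row, column); the residue of $(r,c)\in\mathbb Z^2$ is $c-r+e\mathbb Z$ and an $i$-node is a node of residue $i$. A removable node of $\lambda$ is a node $(r,\lambda_r)$ with $\lambda_r>\lambda_{r+1}$; an addable node is a node not in $\lambda$ whose addition gives a partition. The depth of $(r,c)\in\mathbb Z^2$ is $\mathrm{dep}(r,c)=yr+(e-y)c$. The hook of $\lambda$ at $(r,c)$ has length $\lambda_r-c+\lambda'_c-r+1$ and arm length $\lambda_r-c$. A hook is $y$-bad if it has length $te$ and arm length $\lfloor yt\rfloor$ for some positive integer $t$ not divisible by $z$. *)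

theory Defs
  imports Complex_Main
begin

text \<open>Partitions: lambda :: nat => nat, where lambda r is the length of row r
  for rows r >= 1 (index 0 is ignored). Nodes are pairs (r,c) with r,c >= 1.\<close>

definition is_partition :: "(nat \<Rightarrow> nat) \<Rightarrow> bool" where
  "is_partition la \<longleftrightarrow> (\<forall>r\<ge>1. la (Suc r) \<le> la r) \<and> finite {r. r \<ge> 1 \<and> 0 < la r}"

definition in_diagram :: "(nat \<Rightarrow> nat) \<Rightarrow> nat \<times> nat \<Rightarrow> bool" where
  "in_diagram la n \<longleftrightarrow> (case n of (r, c) \<Rightarrow> 1 \<le> r \<and> 1 \<le> c \<and> c \<le> la r)"

definition conj_part :: "(nat \<Rightarrow> nat) \<Rightarrow> nat \<Rightarrow> nat" where
  "conj_part la c = card {r. 1 \<le> r \<and> c \<le> la r}"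

definition removable :: "(nat \<Rightarrow> nat) \<Rightarrow> nat \<times> nat \<Rightarrow> bool" where
  "removable la n \<longleftrightarrow> (case n of (r, c) \<Rightarrow>
      1 \<le> r \<and> 1 \<le> c \<and> c = la r \<and> la (Suc r) < la r)"

definition addable :: "(nat \<Rightarrow> nat) \<Rightarrow> nat \<times> nat \<Rightarrow> bool" where
  "addable la n \<longleftrightarrow> (case n of (s, d) \<Rightarrow>
      1 \<le> s \<and> 1 \<le> d \<and> \<not> in_diagram la (s, d) \<and>
      is_partition (la(s := la s + 1)) \<and> d = la s + 1)"

definition residue :: "nat \<Rightarrow> nat \<times> nat \<Rightarrow> int" where
  "residue e n = (case n of (r, c) \<Rightarrow> (int c - int r) mod int e)"

definition dep :: "nat \<Rightarrow> rat \<Rightarrow> nat \<times> nat \<Rightarrow> rat" where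
  "dep e y n = (case n of (r, c) \<Rightarrow> y * of_nat r + (of_nat e - y) * of_nat c)"

definition hook_length :: "(nat \<Rightarrow> nat) \<Rightarrow> nat \<times> nat \<Rightarrow> int" where
  "hook_length la n = (case n of (r, c) \<Rightarrow>
      int (la r) - int c + int (conj_part la c) - int r + 1)"

definition arm_length :: "(nat \<Rightarrow> nat) \<Rightarrow> nat \<times> nat \<Rightarrow> int" where
  "arm_length la n = (case n of (r, c) \<Rightarrow> int (la r) - int c)"

definition denom :: "rat \<Rightarrow> int" where
  "denom y = snd (quotient_of y)"

definition bad_hook :: "nat \<Rightarrow> rat \<Rightarrow> (nat \<Rightarrow> nat) \<Rightarrow> nat \<times> nat \<Rightarrow> bool" where
  "bad_hook e y la n \<longleftrightarrow> in_diagram la n \<and>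
     (\<exists>t::int. 0 < t \<and> \<not> denom y dvd t \<and> hook_length la n = t * int e \<and>
        arm_length la n = \<lfloor>y * of_int t\<rfloor>)"

definition has_bad_hook :: "nat \<Rightarrow> rat \<Rightarrow> (nat \<Rightarrow> nat) \<Rightarrow> bool" where
  "has_bad_hook e y la \<longleftrightarrow> (\<exists>n. bad_hook e y la n)"

end

theory Submission
  imports Defs
begin

text \<open>Since the two nodes have the same residue, (d - s) - (c - r) = t e for an integer t,
  and the depth window says exactly that y t lies strictly between d - c - 1 and d - c.
  The nodes cannot lie in the same row. If the addable node is above the removable one, the
  hook at (s, c) has arm d - c - 1 and length t e; if it is below, the hook at (r, d) has arm
  c - d and length -t e. Either way the arm is the floor of y times the quotient of the hook
  length by e, and since that product is not an integer, the quotient is not divisible by the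
  denominator of y.\<close>

lemma partition_antimono:
  assumes "is_partition la" "1 \<le> a" "a \<le> b"
  shows "la b \<le> la a"
  using assms(3)
proof (induction b rule: dec_induct)
  case (step n)
  then have "la (Suc n) \<le> la n" using assms(1,2) unfolding is_partition_def by auto
  with step show ?case by simp
qed simp

lemma conj_part_eq_last_row:
  assumes "is_partition la" "1 \<le> m" "c \<le> la m" "la (Suc m) < c"
  shows "conj_part la c = m"
proof -
  have "{x. 1 \<le> x \<and> c \<le> la x} = {1..m}"
  proof (intro set_eqI iffI)
    fix x assume x: "x \<in> {x. 1 \<le> x \<and> c \<le> la x}"
    show "x \<in> {1..m}"
    proof (rule ccontr)
      assume "x \<notin> {1..m}"
      then have "la x \<le> la (Suc m)" using x partition_antimono[OF assms(1)] by simp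
      with x assms(4) show False by simp
    qed
  next
    fix x assume "x \<in> {1..m}"
    then show "x \<in> {x. 1 \<le> x \<and> c \<le> la x}"
      using partition_antimono[OF assms(1), of x m] assms(3) by auto
  qed
  then show ?thesis unfolding conj_part_def by simp
qed

lemma addable_le_row_above:
  assumes "addable la (s, d)" "2 \<le> s"
  shows "d \<le> la (s - 1)"
proof -
  have "is_partition (la(s := la s + 1))" "d = la s + 1"
    using assms(1) unfolding addable_def by auto
  moreover have "1 \<le> s - 1" "Suc (s - 1) = s" "s - 1 \<noteq> s" using assms(2) by auto
  ultimately show ?thesis unfolding is_partition_def by (metis fun_upd_same fun_upd_other)
qed

lemma hook_above_removable:
  assumes "is_partition la" "removable la (r, c)" "addable la (s, d)" "s < r"
  shows "in_diagram la (s, c)"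
    and "hook_length la (s, c) = (int d - int c) + (int r - int s)"
    and "arm_length la (s, c) = int d - int c - 1"
proof -
  have r: "1 \<le> r" "c = la r" "la (Suc r) < la r" and s: "1 \<le> s" "d = la s + 1"
    using assms(2,3) unfolding removable_def addable_def by auto
  have "la r \<le> la s" using partition_antimono[OF assms(1) s(1)] assms(4) by simp
  moreover have "conj_part la c = r" using conj_part_eq_last_row[OF assms(1)] r by simp
  ultimately show "in_diagram la (s, c)" "hook_length la (s, c) = (int d - int c) + (int r - int s)"
      "arm_length la (s, c) = int d - int c - 1"
    using assms(2) r s unfolding in_diagram_def removable_def hook_length_def arm_length_def
    by auto
qed

lemma hook_below_removable:
  assumes "is_partition la" "removable la (r, c)" "addable la (s, d)" "r < s"
  shows "in_diagram la (r, d)"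
    and "hook_length la (r, d) = (int c - int d) + (int s - int r)"
    and "arm_length la (r, d) = int c - int d"
proof -
  have r: "1 \<le> r" "c = la r" "la (Suc r) < la r" and s: "1 \<le> s" "d = la s + 1"
    using assms(2,3) unfolding removable_def addable_def by auto
  have "la s \<le> la (Suc r)" using partition_antimono[OF assms(1), of "Suc r" s] assms(4) by simp
  then have dc: "d \<le> c" using r s by simp
  have "conj_part la d = s - 1"
    using conj_part_eq_last_row[OF assms(1), of "s - 1" d] addable_le_row_above[OF assms(3)]
      assms(4) r s by simp
  then show "in_diagram la (r, d)" "hook_length la (r, d) = (int c - int d) + (int s - int r)"
      "arm_length la (r, d) = int c - int d"
    using dc r s assms(4) unfolding in_diagram_def hook_length_def arm_length_def by auto
qed

lemma residue_eq_imp_dvd: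
  assumes "residue e (r, c) = residue e (s, d)"
  shows "int e dvd (int d - int s) - (int c - int r)"
  using assms[symmetric] unfolding residue_def by (simp add: mod_eq_dvd_iff)

lemma same_residue_rows_differ:
  assumes "2 \<le> e" "removable la (r, c)" "addable la (s, d)"
    and "residue e (r, c) = residue e (s, d)"
  shows "s \<noteq> r"
proof
  assume "s = r"
  then have "(int d - int s) - (int c - int r) = 1"
    using assms(2,3) unfolding removable_def addable_def by simp
  then have "int e dvd 1" using residue_eq_imp_dvd[OF assms(4)] by simp
  with assms(1) show False by simp
qed

lemma dep_diff:
  "dep e y (s, d) - dep e y (r, c)
     = of_nat e * of_int (int d - int c) - y * of_int ((int d - int s) - (int c - int r))"
  unfolding dep_def by (simp add: algebra_simps)

lemma dep_window_bounds:
  assumes "0 < e" "(int d - int s) - (int c - int r) = t * int e"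
    and "dep e y (s, d) - of_nat e < dep e y (r, c)" "dep e y (r, c) < dep e y (s, d)"
  shows "of_int (int d - int c) - 1 < y * of_int t" "y * of_int t < of_int (int d - int c)"
proof -
  define x where "x = of_int (int d - int c) - y * of_int t"
  have "dep e y (s, d) - dep e y (r, c) = of_nat e * x"
    unfolding dep_diff assms(2) x_def by (simp add: algebra_simps)
  then have "0 < of_nat e * x" "of_nat e * x < of_nat e * 1" using assms(3,4) by linarith+
  then have "0 < x" "x < 1" using assms(1) by (simp_all add: zero_less_mult_iff)
  then show "of_int (int d - int c) - 1 < y * of_int t" "y * of_int t < of_int (int d - int c)"
    unfolding x_def by linarith+
qed

lemma denom_dvd_imp_mult_Ints:
  assumes "denom y dvd t"
  shows "y * of_int t \<in> \<int>"
proof -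
  obtain p q where pq: "quotient_of y = (p, q)" by (cases "quotient_of y")
  from assms obtain k where "t = q * k" using pq unfolding denom_def by (auto elim: dvdE)
  then have "y * of_int t = of_int (p * k)"
    using quotient_of_div[OF pq] quotient_of_denom_pos[OF pq] by simp
  then show ?thesis by simp
qed

lemma bad_hookI:
  assumes "in_diagram la n" "0 < y" "hook_length la n = t * int e"
    and "of_int (arm_length la n) < y * of_int t" "y * of_int t < of_int (arm_length la n) + 1"
  shows "bad_hook e y la n"
proof -
  have "0 \<le> arm_length la n" using assms(1) unfolding in_diagram_def arm_length_def by auto
  then have "0 < y * of_int t" using assms(4) by (meson of_int_0_le_iff le_less_trans)
  then have "0 < t" using assms(2) by (simp add: zero_less_mult_iff)
  moreover have "\<lfloor>y * of_int t\<rfloor> = arm_length la n" using assms(4,5) by (simp add: floor_eq_iff)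
  moreover have "\<not> denom y dvd t"
  proof
    assume "denom y dvd t"
    then have "y * of_int t \<in> \<int>" by (rule denom_dvd_imp_mult_Ints)
    then obtain k where "y * of_int t = of_int k" by (rule Ints_cases)
    with assms(4,5) have "arm_length la n < k" "k < arm_length la n + 1" by simp_all
    then show False by simp
  qed
  ultimately show ?thesis unfolding bad_hook_def using assms(1,3) by auto
qed

theorem mainTheorem4:
  fixes e :: nat and y :: rat and i :: int and la :: "nat \<Rightarrow> nat"
    and r c s d :: nat
  assumes "3 \<le> e"
    and "1 \<le> y" and "y \<le> of_nat e - 1"
    and "denom y > 1"
    and "is_partition la"
    and "removable la (r, c)" and "residue e (r, c) = i mod int e"
    and "addable la (s, d)" and "residue e (s, d) = i mod int e"
    and "dep e y (s, d) - of_nat e < dep e y (r, c)"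
    and "dep e y (r, c) < dep e y (s, d)"
  shows "has_bad_hook e y la"
proof -
  have res: "residue e (r, c) = residue e (s, d)" using assms(7,9) by simp
  then obtain t where t: "(int d - int s) - (int c - int r) = t * int e"
    using residue_eq_imp_dvd by (metis dvd_def mult.commute)
  have y_t: "of_int (int d - int c) - 1 < y * of_int t" "y * of_int t < of_int (int d - int c)"
    using dep_window_bounds[OF _ t assms(10,11)] assms(1) by auto
  have "s \<noteq> r"
    using same_residue_rows_differ[OF _ assms(6,8) res] assms(1) by simp
  then consider "s < r" | "r < s" by linarith
  then show ?thesis
  proof cases
    case 1
    note hook = hook_above_removable[OF assms(5,6,8) 1]
    have "bad_hook e y la (s, c)"
    proof (rule bad_hookI[OF hook(1)])
      show "0 < y" using assms(2) by simp
      show "hook_length la (s, c) = t * int e" using hook(2) t by simp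
      show "of_int (arm_length la (s, c)) < y * of_int t" using hook(3) y_t by simp
      show "y * of_int t < of_int (arm_length la (s, c)) + 1" using hook(3) y_t by simp
    qed
    then show ?thesis unfolding has_bad_hook_def by blast
  next
    case 2
    note hook = hook_below_removable[OF assms(5,6,8) 2]
    have "bad_hook e y la (r, d)"
    proof (rule bad_hookI[OF hook(1)])
      show "0 < y" using assms(2) by simp
      show "hook_length la (r, d) = (- t) * int e" using hook(2) t by simp
      show "of_int (arm_length la (r, d)) < y * of_int (- t)" using hook(3) y_t by simp
      show "y * of_int (- t) < of_int (arm_length la (r, d)) + 1" using hook(3) y_t by simp
    qed
    then show ?thesis unfolding has_bad_hook_def by blast
  qed
qed

end
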